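(* For every variable-free formula $\psi$, the logics $\mathrm{E4}+\psi$, $\mathrm{S04}+\psi$ and $\mathrm{EMC4}+\psi$ have the finite model property (there is a class of finite neighborhood frames whose set of valid formulas is exactly the logic).
   Context: Modal formulas are built from a countable set $Var$ of propositional variables using $\neg$, $\wedge$ and the unary operator $\Box$; a formula is variable-free if no element of $Var$ occurs in it except within the constants $\top$, $\bot$ (here $\top:=\neg(p\wedge\neg p)$, $\bot:=p\wedge\neg p$ are treated as constants). A (modal) logic is a set of formulas containing all classical tautologies and closed under modus ponens, uniform substitution, and the rule (RE): from $\varphi\leftrightarrow\psi$ infer $\Box\varphi\leftrightarrow\Box\psi$. $\mathrm{E}$ is the smallest logic; $\mathrm{L}+\psi$ is the smallest logic containing $\mathrm{L}\cup\{\psi\}$. Axioms: $(4)\ \Box p\to\Box\Box p$; $(\mathrm{T})\ \Box p\to p$; $(\mathrm{M})\ \Box(p\wedge q)\to(\Box p\wedge\Box q)$; $(\mathrm{C})\ (\Box p\wedge\Box q)\to\Box(p\wedge q)$. $\mathrm{E4}=\mathrm{E}+4$, $\mathrm{EMC4}=\mathrm{E4}+\mathrm{M}+\mathrm{C}$, $\mathrm{S04}=\mathrm{E4}+\mathrm{T}+\mathrm{M}$. A neighborhood frame is $(W,\bm{\Box})$ with $W\neq\varnothing$, $\bm{\Box}:\mathcal P(W)\to\mathcal P(W)$; models add $V:Var\to\mathcal P(W)$; truth sets: $|p|_M=V(p)$, $|\neg\varphi|_M=W\setminus|\varphi|_M$, $|\varphi\wedge\psi|_M=|\varphi|_M\cap|\psi|_M$,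 $|\Box\varphi|_M=\bm{\Box}|\varphi|_M$; $\varphi$ is valid on a frame if $|\varphi|_M=W$ for all models $M$ on it. *)

theory Defs
  imports Main
begin

datatype fm = Var nat | Neg fm | Conj fm fm | Box fm

definition p0 :: fm where "p0 = Var 0"
definition q0 :: fm where "q0 = Var 1"

definition Top :: fm where "Top = Neg (Conj p0 (Neg p0))"
definition Bot :: fm where "Bot = Conj p0 (Neg p0)"

definition Imp :: "fm \<Rightarrow> fm \<Rightarrow> fm" where "Imp a b = Neg (Conj a (Neg b))"
definition Iff :: "fm \<Rightarrow> fm \<Rightarrow> fm" where "Iff a b = Conj (Imp a b) (Imp b a)"

text \<open>Variable-free formulas: no variable occurs except inside the constants Top, Bot.\<close>
inductive variable_free :: "fm \<Rightarrow> bool" where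
  vf_top: "variable_free Top"
| vf_bot: "variable_free Bot"
| vf_neg: "variable_free a \<Longrightarrow> variable_free (Neg a)"
| vf_conj: "variable_free a \<Longrightarrow> variable_free b \<Longrightarrow> variable_free (Conj a b)"
| vf_box: "variable_free a \<Longrightarrow> variable_free (Box a)"

fun peval :: "(fm \<Rightarrow> bool) \<Rightarrow> fm \<Rightarrow> bool" where
  "peval v (Var n) = v (Var n)"
| "peval v (Neg a) = (\<not> peval v a)"
| "peval v (Conj a b) = (peval v a \<and> peval v b)"
| "peval v (Box a) = v (Box a)"

definition tautology :: "fm \<Rightarrow> bool" where
  "tautology a \<longleftrightarrow> (\<forall>v. peval v a)"

fun subst :: "(nat \<Rightarrow> fm) \<Rightarrow> fm \<Rightarrow> fm" where
  "subst s (Var n) = s n"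
| "subst s (Neg a) = Neg (subst s a)"
| "subst s (Conj a b) = Conj (subst s a) (subst s b)"
| "subst s (Box a) = Box (subst s a)"

definition is_logic :: "fm set \<Rightarrow> bool" where
  "is_logic L \<longleftrightarrow>
     (\<forall>a. tautology a \<longrightarrow> a \<in> L)
   \<and> (\<forall>a b. a \<in> L \<longrightarrow> Imp a b \<in> L \<longrightarrow> b \<in> L)
   \<and> (\<forall>a s. a \<in> L \<longrightarrow> subst s a \<in> L)
   \<and> (\<forall>a b. Iff a b \<in> L \<longrightarrow> Iff (Box a) (Box b) \<in> L)"

definition logic_gen :: "fm set \<Rightarrow> fm set" where
  "logic_gen A = \<Inter> {L. is_logic L \<and> A \<subseteq> L}"

definition logicE :: "fm set" where "logicE = logic_gen {}"

definition plus :: "fm set \<Rightarrow> fm \<Rightarrow> fm set" where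
  "plus L a = logic_gen (L \<union> {a})"

definition ax4 :: fm where "ax4 = Imp (Box p0) (Box (Box p0))"
definition axT :: fm where "axT = Imp (Box p0) p0"
definition axM :: fm where "axM = Imp (Box (Conj p0 q0)) (Conj (Box p0) (Box q0))"
definition axC :: fm where "axC = Imp (Conj (Box p0) (Box q0)) (Box (Conj p0 q0))"

definition E4 :: "fm set" where "E4 = plus logicE ax4"
definition EMC4 :: "fm set" where "EMC4 = plus (plus E4 axM) axC"
definition S04 :: "fm set" where "S04 = plus (plus E4 axT) axM"

text \<open>Frames are represented with carrier a subset of nat (any finite/countable frame
  is isomorphic to one of these). A frame is (W, B) with W nonempty and B mapping
  subsets of W to subsets of W; values of B outside P(W) are irrelevant.\<close>
type_synonym frame = "nat set \<times> (nat set \<Rightarrow> nat set)"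

definition is_frame :: "frame \<Rightarrow> bool" where
  "is_frame F \<longleftrightarrow> fst F \<noteq> {} \<and> (\<forall>X. X \<subseteq> fst F \<longrightarrow> snd F X \<subseteq> fst F)"

fun truth :: "frame \<Rightarrow> (nat \<Rightarrow> nat set) \<Rightarrow> fm \<Rightarrow> nat set" where
  "truth F V (Var n) = V n"
| "truth F V (Neg a) = fst F - truth F V a"
| "truth F V (Conj a b) = truth F V a \<inter> truth F V b"
| "truth F V (Box a) = snd F (truth F V a)"

definition valid_in :: "frame \<Rightarrow> fm \<Rightarrow> bool" where
  "valid_in F a \<longleftrightarrow> (\<forall>V. (\<forall>n. V n \<subseteq> fst F) \<longrightarrow> truth F V a = fst F)"

definition fmp :: "fm set \<Rightarrow> bool" where
  "fmp L \<longleftrightarrow> (\<exists>C. (\<forall>F\<in>C. is_frame F \<and> finite (fst F))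
                \<and> L = {a. \<forall>F\<in>C. valid_in F a})"

end

theory Submission
  imports Defs
begin

text \<open>Let \<open>L\<close> be one of the three logics extended by \<open>\<psi>\<close>, and \<open>a \<notin> L\<close>.
  Filtrate the canonical model of \<open>L\<close> through the finite, subformula-closed set \<open>S\<close>
  of subformulas of \<open>a\<close>, \<open>\<psi>\<close> and \<open>\<box>\<top>\<close>: the worlds are the \<open>L\<close>-consistent
  subsets of \<open>S\<close>, and any neighbourhood function \<open>B\<close> with \<open>B \<parallel>\<phi>\<parallel> = \<parallel>\<box>\<phi>\<parallel>\<close>
  for \<open>\<box>\<phi> \<in> S\<close> satisfies the truth lemma on \<open>S\<close>, so \<open>a\<close> fails in the model.
  Since \<open>\<psi>\<close> is variable-free, its truth set does not depend on the valuation, so \<open>\<psi>\<close>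
  is valid on the frame and not merely true in the model. It remains to choose \<open>B\<close> so
  that the frame also validates the axioms of \<open>L\<close>: for E4, extend the map
  \<open>\<parallel>\<phi>\<parallel> \<mapsto> \<parallel>\<box>\<phi>\<parallel>\<close> (well defined by RE) by the identity; for S04, take the
  interior operator whose open sets are the unions of sets \<open>\<parallel>\<box>\<phi>\<parallel>\<close>; for EMC4, let
  the neighbourhoods of a world containing \<open>\<box>\<top>\<close> be the supersets of the set of
  worlds containing \<open>\<phi>\<close> and \<open>\<box>\<phi>\<close> for every \<open>\<box>\<phi>\<close> in it.\<close>

section \<open>Derivations in a logic\<close>

fun conjs :: "fm list \<Rightarrow> fm" where
  "conjs [] = Top"
| "conjs (a # as) = Conj a (conjs as)"

lemma peval_Top [simp]: "peval v Top"
  by (simp add: Top_def)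

lemma peval_Imp [simp]: "peval v (Imp a b) \<longleftrightarrow> (peval v a \<longrightarrow> peval v b)"
  by (simp add: Imp_def)

lemma peval_Iff [simp]: "peval v (Iff a b) \<longleftrightarrow> (peval v a \<longleftrightarrow> peval v b)"
  by (auto simp: Iff_def)

lemma peval_conjs [simp]: "peval v (conjs xs) \<longleftrightarrow> (\<forall>x\<in>set xs. peval v x)"
  by (induction xs) auto

lemma subst_Imp [simp]: "subst s (Imp a b) = Imp (subst s a) (subst s b)"
  by (simp add: Imp_def)

lemma logic_tautology: "is_logic L \<Longrightarrow> tautology a \<Longrightarrow> a \<in> L"
  unfolding is_logic_def by blast

lemma logic_mp: "is_logic L \<Longrightarrow> a \<in> L \<Longrightarrow> Imp a b \<in> L \<Longrightarrow> b \<in> L"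
  unfolding is_logic_def by blast

lemma logic_subst: "is_logic L \<Longrightarrow> a \<in> L \<Longrightarrow> subst s a \<in> L"
  unfolding is_logic_def by blast

lemma logic_RE: "is_logic L \<Longrightarrow> Iff a b \<in> L \<Longrightarrow> Iff (Box a) (Box b) \<in> L"
  unfolding is_logic_def by blast

lemma logic_consequence:
  assumes L: "is_logic L" and "set xs \<subseteq> L" and "\<And>v. \<forall>x\<in>set xs. peval v x \<Longrightarrow> peval v b"
  shows "b \<in> L"
  using assms(2,3)
proof (induction xs arbitrary: b)
  case Nil
  then have "tautology b"
    by (simp add: tautology_def)
  then show ?case
    by (rule logic_tautology[OF L])
next
  case (Cons x xs)
  have "Imp x b \<in> L"
    by (rule Cons.IH) (use Cons.prems in auto)
  then show ?case
    using Cons.prems(1) by (auto intro: logic_mp[OF L])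
qed

lemma logic_consequence1:
  "is_logic L \<Longrightarrow> a \<in> L \<Longrightarrow> (\<And>v. peval v a \<Longrightarrow> peval v b) \<Longrightarrow> b \<in> L"
  by (rule logic_consequence[of L "[a]"]) auto

lemma logic_consequence2:
  "is_logic L \<Longrightarrow> a \<in> L \<Longrightarrow> b \<in> L \<Longrightarrow> (\<And>v. peval v a \<Longrightarrow> peval v b \<Longrightarrow> peval v c) \<Longrightarrow> c \<in> L"
  by (rule logic_consequence[of L "[a, b]"]) auto

lemma logic_consequence3:
  "is_logic L \<Longrightarrow> a \<in> L \<Longrightarrow> b \<in> L \<Longrightarrow> c \<in> L
    \<Longrightarrow> (\<And>v. peval v a \<Longrightarrow> peval v b \<Longrightarrow> peval v c \<Longrightarrow> peval v d) \<Longrightarrow> d \<in> L"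
  by (rule logic_consequence[of L "[a, b, c]"]) auto

lemma ax4_instance: "is_logic L \<Longrightarrow> ax4 \<in> L \<Longrightarrow> Imp (Box a) (Box (Box a)) \<in> L"
  using logic_subst[of L ax4 "\<lambda>_. a"] by (simp add: ax4_def p0_def)

lemma axT_instance: "is_logic L \<Longrightarrow> axT \<in> L \<Longrightarrow> Imp (Box a) a \<in> L"
  using logic_subst[of L axT "\<lambda>_. a"] by (simp add: axT_def p0_def)

lemma axM_instance:
  "is_logic L \<Longrightarrow> axM \<in> L \<Longrightarrow> Imp (Box (Conj a b)) (Conj (Box a) (Box b)) \<in> L"
  using logic_subst[of L axM "\<lambda>n. if n = 0 then a else b"] by (simp add: axM_def p0_def q0_def)

lemma axC_instance:
  "is_logic L \<Longrightarrow> axC \<in> L \<Longrightarrow> Imp (Conj (Box a) (Box b)) (Box (Conj a b)) \<in> L"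
  using logic_subst[of L axC "\<lambda>n. if n = 0 then a else b"] by (simp add: axC_def p0_def q0_def)

lemma logic_RM:
  assumes L: "is_logic L" and "axM \<in> L" and "Imp a b \<in> L"
  shows "Imp (Box a) (Box b) \<in> L"
proof -
  have "Iff a (Conj a b) \<in> L"
    using \<open>Imp a b \<in> L\<close> by (rule logic_consequence1[OF L]) auto
  then have "Iff (Box a) (Box (Conj a b)) \<in> L"
    by (rule logic_RE[OF L])
  moreover have "Imp (Box (Conj a b)) (Conj (Box a) (Box b)) \<in> L"
    by (rule axM_instance[OF L \<open>axM \<in> L\<close>])
  ultimately show ?thesis
    by (rule logic_consequence2[OF L]) auto
qed

lemma axC_conjs:
  assumes L: "is_logic L" and "axC \<in> L"
  shows "Imp (Conj (conjs (map Box xs)) (Box Top)) (Box (conjs xs)) \<in> L"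
proof (induction xs)
  case Nil
  show ?case
    by (rule logic_consequence[OF L, of "[]"]) auto
next
  case (Cons x xs)
  have "Imp (Conj (Box x) (Box (conjs xs))) (Box (Conj x (conjs xs))) \<in> L"
    by (rule axC_instance[OF L \<open>axC \<in> L\<close>])
  then show ?case
    using Cons.IH by (rule logic_consequence2[OF L]) auto
qed

lemma logic_Iff_iff:
  assumes L: "is_logic L"
  shows "Iff a b \<in> L \<longleftrightarrow> Imp a b \<in> L \<and> Imp b a \<in> L"
proof
  assume iff: "Iff a b \<in> L"
  have "Imp a b \<in> L"
    using iff by (rule logic_consequence1[OF L]) auto
  moreover have "Imp b a \<in> L"
    using iff by (rule logic_consequence1[OF L]) auto
  ultimately show "Imp a b \<in> L \<and> Imp b a \<in> L" ..
next
  assume "Imp a b \<in> L \<and> Imp b a \<in> L"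
  then have "Imp a b \<in> L" "Imp b a \<in> L"
    by blast+
  then show "Iff a b \<in> L"
    by (rule logic_consequence2[OF L]) auto
qed

lemma logic_Box_conjs_imp:
  assumes L: "is_logic L" and "ax4 \<in> L" "axM \<in> L" "axC \<in> L"
    and "Imp (conjs (xs @ map Box xs)) a \<in> L"
  shows "Imp (Box (conjs xs)) (Box a) \<in> L"
proof -
  let ?m = "conjs xs"
  have "Imp (Box ?m) (Box x) \<in> L" if "x \<in> set xs" for x
    by (rule logic_RM[OF L \<open>axM \<in> L\<close>], rule logic_consequence[OF L, of "[]"])
      (use that in auto)
  then have "Imp (Conj ?m (Box ?m)) a \<in> L"
    using \<open>Imp (conjs (xs @ map Box xs)) a \<in> L\<close>
    by (intro logic_consequence[OF L,
          of "Imp (conjs (xs @ map Box xs)) a # map (\<lambda>x. Imp (Box ?m) (Box x)) xs"]) auto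
  then have "Imp (Box (Conj ?m (Box ?m))) (Box a) \<in> L"
    by (rule logic_RM[OF L \<open>axM \<in> L\<close>])
  moreover have "Imp (Conj (Box ?m) (Box (Box ?m))) (Box (Conj ?m (Box ?m))) \<in> L"
    by (rule axC_instance[OF L \<open>axC \<in> L\<close>])
  moreover have "Imp (Box ?m) (Box (Box ?m)) \<in> L"
    by (rule ax4_instance[OF L \<open>ax4 \<in> L\<close>])
  ultimately show ?thesis
    by (rule logic_consequence3[OF L]) auto
qed

lemma is_logic_logic_gen: "is_logic (logic_gen A)"
  unfolding logic_gen_def is_logic_def by blast

lemma is_logic_plus: "is_logic (plus L a)"
  unfolding plus_def by (rule is_logic_logic_gen)

lemma plus_subset_iff: "is_logic L' \<Longrightarrow> plus L a \<subseteq> L' \<longleftrightarrow> L \<subseteq> L' \<and> a \<in> L'"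
  unfolding plus_def logic_gen_def by blast

lemma logicE_subset: "is_logic L \<Longrightarrow> logicE \<subseteq> L"
  unfolding logicE_def logic_gen_def by blast

lemma E4_subset_iff: "is_logic L \<Longrightarrow> E4 \<subseteq> L \<longleftrightarrow> ax4 \<in> L"
  by (simp add: E4_def plus_subset_iff logicE_subset)

lemma S04_subset_iff: "is_logic L \<Longrightarrow> S04 \<subseteq> L \<longleftrightarrow> ax4 \<in> L \<and> axT \<in> L \<and> axM \<in> L"
  by (auto simp: S04_def plus_subset_iff E4_subset_iff)

lemma EMC4_subset_iff: "is_logic L \<Longrightarrow> EMC4 \<subseteq> L \<longleftrightarrow> ax4 \<in> L \<and> axM \<in> L \<and> axC \<in> L"
  by (auto simp: EMC4_def plus_subset_iff E4_subset_iff)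

section \<open>Validity on neighbourhood frames\<close>

lemma truth_subset: "is_frame F \<Longrightarrow> \<forall>n. V n \<subseteq> fst F \<Longrightarrow> truth F V a \<subseteq> fst F"
  by (induction a) (auto simp: is_frame_def)

lemma truth_peval: "w \<in> fst F \<Longrightarrow> w \<in> truth F V a \<longleftrightarrow> peval (\<lambda>x. w \<in> truth F V x) a"
  by (induction a) auto

lemma truth_subst: "truth F V (subst s a) = truth F (\<lambda>n. truth F V (s n)) a"
  by (induction a) auto

lemma truth_variable_free: "variable_free \<psi> \<Longrightarrow> truth F V \<psi> = truth F V' \<psi>"
  by (induction rule: variable_free.induct) (auto simp: Top_def Bot_def)

lemma is_logic_valid_in:
  assumes F: "is_frame F"
  shows "is_logic {a. valid_in F a}"
proof -
  have truth_Imp: "truth F V (Imp a b) = fst F \<longleftrightarrow> truth F V a \<subseteq> truth F V b"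
    if "\<forall>n. V n \<subseteq> fst F" for V a b
    using truth_subset[OF F that] by (auto simp: Imp_def)
  have truth_Iff: "truth F V (Iff a b) = fst F \<longleftrightarrow> truth F V a = truth F V b"
    if "\<forall>n. V n \<subseteq> fst F" for V a b
    using truth_subset[OF F that] by (auto simp: Iff_def Imp_def)
  have "valid_in F a" if "tautology a" for a
    unfolding valid_in_def
  proof (intro allI impI)
    fix V :: "nat \<Rightarrow> nat set"
    assume "\<forall>n. V n \<subseteq> fst F"
    then show "truth F V a = fst F"
      using that truth_subset[OF F] truth_peval[of _ F V a] unfolding tautology_def by blast
  qed
  moreover have "valid_in F b" if "valid_in F a" "valid_in F (Imp a b)" for a b
    using that truth_subset[OF F] unfolding valid_in_def by (metis truth_Imp subset_antisym)
  moreover have "valid_in F (subst s a)" if "valid_in F a" for a s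
    unfolding valid_in_def truth_subst
  proof (intro allI impI)
    fix V :: "nat \<Rightarrow> nat set"
    assume "\<forall>n. V n \<subseteq> fst F"
    then have "\<forall>n. truth F V (s n) \<subseteq> fst F"
      using truth_subset[OF F] by blast
    then show "truth F (\<lambda>n. truth F V (s n)) a = fst F"
      by (rule that[unfolded valid_in_def, THEN spec, THEN mp])
  qed
  moreover have "valid_in F (Iff (Box a) (Box b))" if "valid_in F (Iff a b)" for a b
    using that truth_Iff unfolding valid_in_def by simp
  ultimately show ?thesis
    unfolding is_logic_def by blast
qed

lemma valid_ax4I: "(\<And>Y. Y \<subseteq> W \<Longrightarrow> B Y \<subseteq> B (B Y)) \<Longrightarrow> valid_in (W, B) ax4"
  unfolding valid_in_def ax4_def Imp_def p0_def by auto

lemma valid_axTI: "(\<And>Y. Y \<subseteq> W \<Longrightarrow> B Y \<subseteq> Y) \<Longrightarrow> valid_in (W, B) axT"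
  unfolding valid_in_def axT_def Imp_def p0_def by auto

lemma valid_axMI:
  "(\<And>X Y. X \<subseteq> W \<Longrightarrow> Y \<subseteq> W \<Longrightarrow> B (X \<inter> Y) \<subseteq> B X \<inter> B Y) \<Longrightarrow> valid_in (W, B) axM"
  unfolding valid_in_def axM_def Imp_def p0_def q0_def by auto

lemma valid_axCI:
  "(\<And>X Y. X \<subseteq> W \<Longrightarrow> Y \<subseteq> W \<Longrightarrow> B X \<inter> B Y \<subseteq> B (X \<inter> Y)) \<Longrightarrow> valid_in (W, B) axC"
  unfolding valid_in_def axC_def Imp_def p0_def q0_def by auto

section \<open>Filtrations of the canonical model\<close>

fun subfms :: "fm \<Rightarrow> fm list" where
  "subfms (Var n) = [Var n]"
| "subfms (Neg a) = Neg a # subfms a"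
| "subfms (Conj a b) = Conj a b # subfms a @ subfms b"
| "subfms (Box a) = Box a # subfms a"

lemma subfms_self [simp]: "a \<in> set (subfms a)"
  by (cases a) auto

lemma subfms_trans: "x \<in> set (subfms y) \<Longrightarrow> set (subfms x) \<subseteq> set (subfms y)"
  by (induction y) auto

locale filtration =
  fixes L :: "fm set" and S :: "fm list"
  assumes logic: "is_logic L"
    and Neg_closed: "Neg a \<in> set S \<Longrightarrow> a \<in> set S"
    and Conj_closed: "Conj a b \<in> set S \<Longrightarrow> a \<in> set S \<and> b \<in> set S"
    and Box_closed: "Box a \<in> set S \<Longrightarrow> a \<in> set S"
begin

definition char_fm :: "fm set \<Rightarrow> fm" where
  "char_fm t = conjs (map (\<lambda>x. if x \<in> t then x else Neg x) S)"

definition derives :: "fm set \<Rightarrow> fm \<Rightarrow> bool" where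
  "derives t a \<longleftrightarrow> Imp (char_fm t) a \<in> L"

definition consistent :: "fm set \<Rightarrow> bool" where
  "consistent t \<longleftrightarrow> Neg (char_fm t) \<notin> L"

definition types :: "fm set set" where
  "types = {t. t \<subseteq> set S \<and> consistent t}"

lemma peval_char_fm: "peval v (char_fm t) \<longleftrightarrow> (\<forall>x\<in>set S. peval v x \<longleftrightarrow> x \<in> t)"
  unfolding char_fm_def peval_conjs set_map ball_simps(9) by auto

lemma derives_consequence:
  assumes "\<forall>x\<in>set xs. derives t x" and "\<And>v. \<forall>x\<in>set xs. peval v x \<Longrightarrow> peval v b"
  shows "derives t b"
  unfolding derives_def
  by (rule logic_consequence[OF logic, of "map (Imp (char_fm t)) xs"])
    (use assms in \<open>auto simp: derives_def\<close>)

lemma derives_consequence1: "derives t a \<Longrightarrow> (\<And>v. peval v a \<Longrightarrow> peval v b) \<Longrightarrow> derives t b"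
  by (rule derives_consequence[of "[a]"]) auto

lemma derives_consequence2:
  "derives t a \<Longrightarrow> derives t b \<Longrightarrow> (\<And>v. peval v a \<Longrightarrow> peval v b \<Longrightarrow> peval v c) \<Longrightarrow> derives t c"
  by (rule derives_consequence[of "[a, b]"]) auto

lemma derives_if_in_L: "a \<in> L \<Longrightarrow> derives t a"
  unfolding derives_def by (rule logic_consequence1[OF logic]) auto

lemma derives_mem: "x \<in> set S \<Longrightarrow> x \<in> t \<Longrightarrow> derives t x"
  unfolding derives_def by (rule logic_consequence[OF logic, of "[]"]) (auto simp: peval_char_fm)

lemma derives_Neg: "x \<in> set S \<Longrightarrow> x \<notin> t \<Longrightarrow> derives t (Neg x)"
  unfolding derives_def by (rule logic_consequence[OF logic, of "[]"]) (auto simp: peval_char_fm)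

lemma consistent_derives_Neg:
  assumes "consistent t" "derives t a"
  shows "\<not> derives t (Neg a)"
proof
  assume "derives t (Neg a)"
  with assms(2) have "Neg (char_fm t) \<in> L"
    unfolding derives_def by (rule logic_consequence2[OF logic]) auto
  with assms(1) show False
    unfolding consistent_def by blast
qed

lemma derives_iff_mem: "consistent t \<Longrightarrow> x \<in> set S \<Longrightarrow> derives t x \<longleftrightarrow> x \<in> t"
  using derives_mem derives_Neg consistent_derives_Neg by blast

lemma derives_Neg_iff: "consistent t \<Longrightarrow> x \<in> set S \<Longrightarrow> derives t (Neg x) \<longleftrightarrow> \<not> derives t x"
  using derives_Neg derives_iff_mem consistent_derives_Neg by blast

lemma derives_Conj_iff: "derives t (Conj a b) \<longleftrightarrow> derives t a \<and> derives t b"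
proof
  assume "derives t (Conj a b)"
  then show "derives t a \<and> derives t b"
    using derives_consequence1 by (metis peval.simps(3))
next
  assume "derives t a \<and> derives t b"
  then show "derives t (Conj a b)"
    using derives_consequence2 by (metis peval.simps(3))
qed

text \<open>The characteristic formulas of all subsets of \<open>S\<close> cover every valuation, and an
  inconsistent one derives everything.\<close>
lemma in_L_if_derived_by_all_types:
  assumes "\<And>t. t \<in> types \<Longrightarrow> derives t a"
  shows "a \<in> L"
proof -
  have imp: "Imp (char_fm t) a \<in> L" if "t \<subseteq> set S" for t
  proof (cases "consistent t")
    case True
    then show ?thesis
      using assms that unfolding types_def derives_def by blast
  next
    case False
    then have "Neg (char_fm t) \<in> L"
      unfolding consistent_def by blast
    then show ?thesis
      by (rule logic_consequence1[OF logic]) auto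
  qed
  have "finite ((\<lambda>t. Imp (char_fm t) a) ` Pow (set S))"
    by simp
  then obtain xs where xs: "set xs = (\<lambda>t. Imp (char_fm t) a) ` Pow (set S)"
    using finite_list by blast
  have "set xs \<subseteq> L"
    unfolding xs image_subset_iff using imp by simp
  then show ?thesis
  proof (rule logic_consequence[OF logic])
    fix v
    assume all: "\<forall>x\<in>set xs. peval v x"
    have "Imp (char_fm {x\<in>set S. peval v x}) a \<in> set xs"
      unfolding xs by (intro imageI) auto
    with all have "peval v (Imp (char_fm {x\<in>set S. peval v x}) a)"
      by blast
    then show "peval v a"
      by (simp add: peval_char_fm)
  qed
qed

lemma finite_types: "finite types"
  unfolding types_def by (rule finite_subset[of _ "Pow (set S)"]) auto

text \<open>Frames have carriers in \<open>nat\<close>, so the consistent types are enumerated.\<close>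
definition worlds :: "nat set" where
  "worlds = {0..<card types}"

definition type_at :: "nat \<Rightarrow> fm set" where
  "type_at = (SOME f. bij_betw f worlds types)"

lemma bij_betw_type_at: "bij_betw type_at worlds types"
  unfolding type_at_def worlds_def using someI_ex[OF ex_bij_betw_nat_finite[OF finite_types]] .

lemma type_at_in_types: "i \<in> worlds \<Longrightarrow> type_at i \<in> types"
  using bij_betw_type_at bij_betwE by blast

lemma consistent_type_at: "i \<in> worlds \<Longrightarrow> consistent (type_at i)"
  using type_at_in_types unfolding types_def by blast

lemma type_at_subset: "i \<in> worlds \<Longrightarrow> type_at i \<subseteq> set S"
  using type_at_in_types unfolding types_def by blast

lemma types_eq_type_at: "types = type_at ` worlds"
  using bij_betw_type_at by (simp add: bij_betw_def)

definition extension :: "fm \<Rightarrow> nat set" where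
  "extension a = {i \<in> worlds. a \<in> type_at i}"

lemma extension_subset_worlds: "extension a \<subseteq> worlds"
  unfolding extension_def by blast

lemma in_extension_iff: "a \<in> set S \<Longrightarrow> i \<in> extension a \<longleftrightarrow> i \<in> worlds \<and> derives (type_at i) a"
  unfolding extension_def using derives_iff_mem consistent_type_at by blast

lemma Imp_conjs_in_L:
  assumes "set xs \<subseteq> set S" "b \<in> set S"
    and "\<And>i. i \<in> worlds \<Longrightarrow> set xs \<subseteq> type_at i \<Longrightarrow> b \<in> type_at i"
  shows "Imp (conjs xs) b \<in> L"
proof (rule in_L_if_derived_by_all_types)
  fix t
  assume "t \<in> types"
  then obtain i where i: "i \<in> worlds" "t = type_at i"
    using types_eq_type_at by blast
  show "derives t (Imp (conjs xs) b)"
  proof (cases "set xs \<subseteq> t")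
    case True
    then have "b \<in> t"
      using assms(3) i by blast
    then have "derives t b"
      using assms(2) derives_mem by blast
    then show ?thesis
      by (rule derives_consequence1) auto
  next
    case False
    then obtain x where x: "x \<in> set xs" "x \<notin> t"
      by blast
    then have "derives t (Neg x)"
      using assms(1) derives_Neg by blast
    then show ?thesis
      by (rule derives_consequence1) (use x in auto)
  qed
qed

lemma extension_subset_iff:
  assumes a: "a \<in> set S" and b: "b \<in> set S"
  shows "extension a \<subseteq> extension b \<longleftrightarrow> Imp a b \<in> L"
proof
  assume "extension a \<subseteq> extension b"
  then have "Imp (conjs [a]) b \<in> L"
    using a b by (intro Imp_conjs_in_L) (auto simp: extension_def)
  then show "Imp a b \<in> L"
    by (rule logic_consequence1[OF logic]) auto
next
  assume imp: "Imp a b \<in> L"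
  show "extension a \<subseteq> extension b"
  proof
    fix i
    assume "i \<in> extension a"
    then have i: "i \<in> worlds" "derives (type_at i) a"
      using in_extension_iff[OF a] by blast+
    have "derives (type_at i) b"
      using i(2) derives_if_in_L[OF imp] by (rule derives_consequence2) auto
    then show "i \<in> extension b"
      using i(1) in_extension_iff[OF b] by blast
  qed
qed

lemma extension_eq_iff:
  "a \<in> set S \<Longrightarrow> b \<in> set S \<Longrightarrow> extension a = extension b \<longleftrightarrow> Iff a b \<in> L"
  by (simp add: set_eq_subset logic_Iff_iff[OF logic] extension_subset_iff)

lemma extension_Box_cong:
  assumes "Box a \<in> set S" "Box b \<in> set S" "extension a = extension b"
  shows "extension (Box a) = extension (Box b)"
proof -
  have "Iff a b \<in> L"
    using assms Box_closed extension_eq_iff by blast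
  then have "Iff (Box a) (Box b) \<in> L"
    by (rule logic_RE[OF logic])
  then show ?thesis
    using assms(1,2) extension_eq_iff by blast
qed

lemma extension_Neg:
  assumes "Neg a \<in> set S"
  shows "extension (Neg a) = worlds - extension a"
proof -
  have a: "a \<in> set S"
    using assms Neg_closed by blast
  show ?thesis
    using consistent_type_at
    by (auto simp: in_extension_iff[OF assms] in_extension_iff[OF a] derives_Neg_iff[OF _ a])
qed

lemma extension_Conj:
  assumes "Conj a b \<in> set S"
  shows "extension (Conj a b) = extension a \<inter> extension b"
proof -
  have "a \<in> set S" "b \<in> set S"
    using assms Conj_closed by blast+
  then show ?thesis
    by (auto simp: in_extension_iff[OF assms] in_extension_iff derives_Conj_iff)
qed

definition canonical_val :: "nat \<Rightarrow> nat set" where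
  "canonical_val n = extension (Var n)"

definition is_filtration :: "(nat set \<Rightarrow> nat set) \<Rightarrow> bool" where
  "is_filtration B \<longleftrightarrow> (\<forall>Y\<subseteq>worlds. B Y \<subseteq> worlds)
    \<and> (\<forall>a. Box a \<in> set S \<longrightarrow> B (extension a) = extension (Box a))"

lemma truth_filtration:
  assumes "is_filtration B"
  shows "a \<in> set S \<Longrightarrow> truth (worlds, B) canonical_val a = extension a"
proof (induction a)
  case (Var n)
  then show ?case
    by (simp add: canonical_val_def)
next
  case (Neg a)
  then show ?case
    using Neg_closed[OF Neg.prems] by (simp add: extension_Neg)
next
  case (Conj a b)
  then show ?case
    using Conj_closed[OF Conj.prems] by (simp add: extension_Conj)
next
  case (Box a)
  then show ?case
    using Box_closed[OF Box.prems] assms unfolding is_filtration_def by simp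
qed

lemma filtration_countermodel:
  assumes B: "is_filtration B"
    and \<psi>: "variable_free \<psi>" "\<psi> \<in> set S" "\<psi> \<in> L"
    and a: "a \<in> set S" "a \<notin> L"
  shows "is_frame (worlds, B) \<and> finite worlds \<and> valid_in (worlds, B) \<psi> \<and> \<not> valid_in (worlds, B) a"
proof (intro conjI)
  have "\<exists>t\<in>types. \<not> derives t a"
    using in_L_if_derived_by_all_types a(2) by blast
  then obtain i where i: "i \<in> worlds" "\<not> derives (type_at i) a"
    unfolding types_eq_type_at by blast
  then show "is_frame (worlds, B)"
    using B unfolding is_filtration_def is_frame_def by auto
  show "finite worlds"
    by (simp add: worlds_def)
  have "extension \<psi> = worlds"
    using derives_if_in_L[OF \<psi>(3)]
    by (auto simp: in_extension_iff[OF \<psi>(2)] extension_subset_worlds)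
  moreover have "truth (worlds, B) V \<psi> = truth (worlds, B) canonical_val \<psi>" for V
    by (rule truth_variable_free[OF \<psi>(1)])
  ultimately show "valid_in (worlds, B) \<psi>"
    unfolding valid_in_def by (simp add: truth_filtration[OF B \<psi>(2)])
  have "i \<notin> truth (worlds, B) canonical_val a"
    using i truth_filtration[OF B a(1)] in_extension_iff[OF a(1)] by simp
  moreover have "\<forall>n. canonical_val n \<subseteq> worlds"
    by (simp add: canonical_val_def extension_subset_worlds)
  ultimately show "\<not> valid_in (worlds, B) a"
    using i(1) unfolding valid_in_def fst_conv by (auto dest: spec[of _ canonical_val])
qed

definition box_E4 :: "nat set \<Rightarrow> nat set" where
  "box_E4 Y = (if \<exists>a. Box a \<in> set S \<and> Y = extension a
    then extension (Box (SOME a. Box a \<in> set S \<and> Y = extension a)) else Y)"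

lemma box_E4_extension:
  assumes "Box a \<in> set S"
  shows "box_E4 (extension a) = extension (Box a)"
proof -
  let ?P = "\<lambda>b. Box b \<in> set S \<and> extension a = extension b"
  have "?P (SOME b. ?P b)"
    using assms by (intro someI[of ?P a]) simp
  then have "extension (Box (SOME b. ?P b)) = extension (Box a)"
    using assms by (intro extension_Box_cong) auto
  then show ?thesis
    using assms unfolding box_E4_def by auto
qed

lemma is_filtration_box_E4: "is_filtration box_E4"
  unfolding is_filtration_def using box_E4_extension
  by (auto simp: box_E4_def extension_subset_worlds)

lemma box_E4_4:
  assumes "ax4 \<in> L"
  shows "box_E4 Y \<subseteq> box_E4 (box_E4 Y)"
proof (cases "\<exists>a. Box a \<in> set S \<and> Y = extension a")
  case True
  then obtain a where a: "Box a \<in> set S" "Y = extension a"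
    by blast
  show ?thesis
  proof (cases "\<exists>b. Box b \<in> set S \<and> extension (Box a) = extension b")
    case True
    then obtain b where b: "Box b \<in> set S" "extension (Box a) = extension b"
      by blast
    have "Iff (Box a) b \<in> L"
      using a(1) b Box_closed extension_eq_iff by blast
    then have "Iff (Box (Box a)) (Box b) \<in> L"
      by (rule logic_RE[OF logic])
    moreover have "Imp (Box a) (Box (Box a)) \<in> L"
      by (rule ax4_instance[OF logic assms])
    ultimately have "Imp (Box a) (Box b) \<in> L"
      by (rule logic_consequence2[OF logic]) auto
    then have "extension (Box a) \<subseteq> extension (Box b)"
      using a(1) b(1) extension_subset_iff by blast
    then show ?thesis
      using a b by (simp add: box_E4_extension)
  next
    case False
    then have "box_E4 (extension (Box a)) = extension (Box a)"
      unfolding box_E4_def by (simp only: if_False)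
    then show ?thesis
      using a by (simp add: box_E4_extension)
  qed
next
  case False
  then have "box_E4 Y = Y"
    unfolding box_E4_def by (simp only: if_False)
  then show ?thesis
    by simp
qed

definition box_S04 :: "nat set \<Rightarrow> nat set" where
  "box_S04 Y = \<Union> {extension (Box a) |a. Box a \<in> set S \<and> extension (Box a) \<subseteq> Y}"

lemma is_filtration_box_S04:
  assumes "ax4 \<in> L" "axT \<in> L" "axM \<in> L"
  shows "is_filtration box_S04"
  unfolding is_filtration_def
proof (intro conjI allI impI)
  show "box_S04 Y \<subseteq> worlds" for Y
    unfolding box_S04_def using extension_subset_worlds by blast
  fix a
  assume a: "Box a \<in> set S"
  then have a': "a \<in> set S"
    by (rule Box_closed)
  have "extension (Box b) \<subseteq> extension (Box a)"
    if b: "Box b \<in> set S" "extension (Box b) \<subseteq> extension a" for b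
  proof -
    have "Imp (Box b) a \<in> L"
      using b a' extension_subset_iff by blast
    then have "Imp (Box (Box b)) (Box a) \<in> L"
      by (rule logic_RM[OF logic assms(3)])
    moreover have "Imp (Box b) (Box (Box b)) \<in> L"
      by (rule ax4_instance[OF logic assms(1)])
    ultimately have "Imp (Box b) (Box a) \<in> L"
      by (rule logic_consequence2[OF logic]) auto
    then show ?thesis
      using a b(1) extension_subset_iff by blast
  qed
  moreover have "extension (Box a) \<subseteq> extension a"
    using a a' axT_instance[OF logic assms(2)] extension_subset_iff by blast
  ultimately show "box_S04 (extension a) = extension (Box a)"
    unfolding box_S04_def using a by blast
qed

definition core :: "nat \<Rightarrow> nat set" where
  "core i = {j \<in> worlds. \<forall>b. Box b \<in> type_at i \<longrightarrow> b \<in> type_at j \<and> Box b \<in> type_at j}"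

definition box_EMC4 :: "nat set \<Rightarrow> nat set" where
  "box_EMC4 Y = {i \<in> worlds. Box Top \<in> type_at i \<and> core i \<subseteq> Y}"

lemma box_EMC4_4: "box_EMC4 Y \<subseteq> box_EMC4 (box_EMC4 Y)"
  unfolding box_EMC4_def core_def by blast

lemma extension_Box_subset_box_EMC4:
  assumes "axM \<in> L" "Box Top \<in> set S" "Box a \<in> set S"
  shows "extension (Box a) \<subseteq> box_EMC4 (extension a)"
proof
  fix i
  assume i: "i \<in> extension (Box a)"
  have "Imp a Top \<in> L"
    by (rule logic_consequence[OF logic, of "[]"]) auto
  then have "Imp (Box a) (Box Top) \<in> L"
    by (rule logic_RM[OF logic assms(1)])
  then have "Box Top \<in> type_at i"
    using i assms(2,3) extension_subset_iff unfolding extension_def by blast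
  moreover have "core i \<subseteq> extension a"
    using i unfolding core_def extension_def by blast
  ultimately show "i \<in> box_EMC4 (extension a)"
    using i unfolding box_EMC4_def extension_def by blast
qed

lemma box_EMC4_subset_extension_Box:
  assumes "ax4 \<in> L" "axM \<in> L" "axC \<in> L" "Box a \<in> set S"
  shows "box_EMC4 (extension a) \<subseteq> extension (Box a)"
proof
  fix i
  assume "i \<in> box_EMC4 (extension a)"
  then have i: "i \<in> worlds" "Box Top \<in> type_at i" "core i \<subseteq> extension a"
    unfolding box_EMC4_def by blast+
  have "finite (Box -` type_at i)"
    by (intro finite_vimageI finite_subset[OF type_at_subset[OF i(1)]]) (auto intro: injI)
  then obtain xs where xs: "set xs = Box -` type_at i"
    by (meson finite_list)
  have "Imp (conjs (xs @ map Box xs)) a \<in> L"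
  proof (rule Imp_conjs_in_L)
    show "set (xs @ map Box xs) \<subseteq> set S"
      using xs type_at_subset[OF i(1)] by (auto dest: Box_closed)
    show "a \<in> set S"
      using assms(4) by (rule Box_closed)
    fix j
    assume "j \<in> worlds" "set (xs @ map Box xs) \<subseteq> type_at j"
    then have "j \<in> core i"
      using xs unfolding core_def by auto
    then show "a \<in> type_at j"
      using i(3) unfolding extension_def by blast
  qed
  then have "Imp (Box (conjs xs)) (Box a) \<in> L"
    by (rule logic_Box_conjs_imp[OF logic assms(1-3)])
  moreover have "Imp (Conj (conjs (map Box xs)) (Box Top)) (Box (conjs xs)) \<in> L"
    by (rule axC_conjs[OF logic assms(3)])
  moreover have "\<forall>x\<in>set (Box Top # map Box xs). derives (type_at i) x"
    using xs i(2) type_at_subset[OF i(1)] derives_mem by auto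
  ultimately have "derives (type_at i) (Box a)"
    using derives_if_in_L
    by (intro derives_consequence[of "Imp (Box (conjs xs)) (Box a)
        # Imp (Conj (conjs (map Box xs)) (Box Top)) (Box (conjs xs)) # Box Top # map Box xs"]) auto
  then show "i \<in> extension (Box a)"
    using i(1) in_extension_iff[OF assms(4)] by blast
qed

lemma is_filtration_box_EMC4:
  assumes "ax4 \<in> L" "axM \<in> L" "axC \<in> L" "Box Top \<in> set S"
  shows "is_filtration box_EMC4"
  unfolding is_filtration_def
proof (intro conjI allI impI)
  show "box_EMC4 Y \<subseteq> worlds" for Y
    unfolding box_EMC4_def by blast
  show "box_EMC4 (extension a) = extension (Box a)" if "Box a \<in> set S" for a
    using assms that
    by (intro subset_antisym box_EMC4_subset_extension_Box extension_Box_subset_box_EMC4)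
qed

end

lemma fmp_plus:
  assumes "\<And>L a. is_logic L \<Longrightarrow> L0 \<subseteq> L \<Longrightarrow> \<psi> \<in> L \<Longrightarrow> a \<notin> L \<Longrightarrow>
    \<exists>F. is_frame F \<and> finite (fst F) \<and> L0 \<subseteq> {b. valid_in F b} \<and> valid_in F \<psi> \<and> \<not> valid_in F a"
  shows "fmp (plus L0 \<psi>)"
proof -
  let ?C = "{F. is_frame F \<and> finite (fst F) \<and> plus L0 \<psi> \<subseteq> {b. valid_in F b}}"
  have "a \<in> plus L0 \<psi>" if "\<forall>F\<in>?C. valid_in F a" for a
  proof (rule ccontr)
    assume "a \<notin> plus L0 \<psi>"
    moreover have "L0 \<subseteq> plus L0 \<psi>" "\<psi> \<in> plus L0 \<psi>"
      using plus_subset_iff[OF is_logic_plus] by blast+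
    ultimately obtain F where F: "is_frame F" "finite (fst F)" "L0 \<subseteq> {b. valid_in F b}"
      "valid_in F \<psi>" "\<not> valid_in F a"
      using assms[OF is_logic_plus] by blast
    then have "F \<in> ?C"
      using plus_subset_iff[OF is_logic_valid_in[OF F(1)]] by blast
    then show False
      using that F(5) by blast
  qed
  then show ?thesis
    unfolding fmp_def by (intro exI[of _ ?C]) auto
qed

lemma filtration_subfms: "is_logic L \<Longrightarrow> filtration L (subfms a)"
  by unfold_locales (auto dest!: subfms_trans)

lemma E4_countermodel:
  assumes "variable_free \<psi>" "is_logic L" "E4 \<subseteq> L" "\<psi> \<in> L" "a \<notin> L"
  shows "\<exists>F. is_frame F \<and> finite (fst F) \<and> E4 \<subseteq> {b. valid_in F b}
    \<and> valid_in F \<psi> \<and> \<not> valid_in F a"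
proof -
  interpret filtration L "subfms (Conj a (Conj \<psi> (Box Top)))"
    by (rule filtration_subfms[OF assms(2)])
  have ax4: "ax4 \<in> L"
    using assms(2,3) E4_subset_iff by blast
  have "is_frame (worlds, box_E4) \<and> finite worlds \<and> valid_in (worlds, box_E4) \<psi>
      \<and> \<not> valid_in (worlds, box_E4) a"
    by (rule filtration_countermodel[OF is_filtration_box_E4]) (use assms in auto)
  moreover have "valid_in (worlds, box_E4) ax4"
    by (rule valid_ax4I) (rule box_E4_4[OF ax4])
  ultimately show ?thesis
    by (intro exI[of _ "(worlds, box_E4)"]) (simp add: E4_subset_iff is_logic_valid_in)
qed

lemma S04_countermodel:
  assumes "variable_free \<psi>" "is_logic L" "S04 \<subseteq> L" "\<psi> \<in> L" "a \<notin> L"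
  shows "\<exists>F. is_frame F \<and> finite (fst F) \<and> S04 \<subseteq> {b. valid_in F b}
    \<and> valid_in F \<psi> \<and> \<not> valid_in F a"
proof -
  interpret filtration L "subfms (Conj a (Conj \<psi> (Box Top)))"
    by (rule filtration_subfms[OF assms(2)])
  have "ax4 \<in> L" "axT \<in> L" "axM \<in> L"
    using assms(2,3) S04_subset_iff by blast+
  then have "is_frame (worlds, box_S04) \<and> finite worlds \<and> valid_in (worlds, box_S04) \<psi>
      \<and> \<not> valid_in (worlds, box_S04) a"
    by (intro filtration_countermodel is_filtration_box_S04) (use assms in auto)
  moreover have "valid_in (worlds, box_S04) ax4"
    by (rule valid_ax4I) (unfold box_S04_def, blast)
  moreover have "valid_in (worlds, box_S04) axT"
    by (rule valid_axTI) (unfold box_S04_def, blast)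
  moreover have "valid_in (worlds, box_S04) axM"
    by (rule valid_axMI) (unfold box_S04_def, blast)
  ultimately show ?thesis
    by (intro exI[of _ "(worlds, box_S04)"]) (simp add: S04_subset_iff is_logic_valid_in)
qed

lemma EMC4_countermodel:
  assumes "variable_free \<psi>" "is_logic L" "EMC4 \<subseteq> L" "\<psi> \<in> L" "a \<notin> L"
  shows "\<exists>F. is_frame F \<and> finite (fst F) \<and> EMC4 \<subseteq> {b. valid_in F b}
    \<and> valid_in F \<psi> \<and> \<not> valid_in F a"
proof -
  interpret filtration L "subfms (Conj a (Conj \<psi> (Box Top)))"
    by (rule filtration_subfms[OF assms(2)])
  have "ax4 \<in> L" "axM \<in> L" "axC \<in> L"
    using assms(2,3) EMC4_subset_iff by blast+
  then have "is_frame (worlds, box_EMC4) \<and> finite worlds \<and> valid_in (worlds, box_EMC4) \<psi>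
      \<and> \<not> valid_in (worlds, box_EMC4) a"
    by (intro filtration_countermodel is_filtration_box_EMC4) (use assms in auto)
  moreover have "valid_in (worlds, box_EMC4) ax4"
    by (rule valid_ax4I) (rule box_EMC4_4)
  moreover have "valid_in (worlds, box_EMC4) axM"
    by (rule valid_axMI) (unfold box_EMC4_def, blast)
  moreover have "valid_in (worlds, box_EMC4) axC"
    by (rule valid_axCI) (unfold box_EMC4_def, blast)
  ultimately show ?thesis
    by (intro exI[of _ "(worlds, box_EMC4)"]) (simp add: EMC4_subset_iff is_logic_valid_in)
qed

theorem mainTheorem3:
  assumes "variable_free \<psi>"
  shows "fmp (plus E4 \<psi>) \<and> fmp (plus S04 \<psi>) \<and> fmp (plus EMC4 \<psi>)"
proof (intro conjI)
  show "fmp (plus E4 \<psi>)"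
    by (rule fmp_plus) (rule E4_countermodel[OF assms])
  show "fmp (plus S04 \<psi>)"
    by (rule fmp_plus) (rule S04_countermodel[OF assms])
  show "fmp (plus EMC4 \<psi>)"
    by (rule fmp_plus) (rule EMC4_countermodel[OF assms])
qed

end
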